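(* Let $q$ be odd, $q\not\equiv0\pmod 3$. Then the point $\mathbf P(1,0,1,0)$ is a $1_\Gamma$-point if $q\equiv-1\pmod3$ and a $3_\Gamma$-point if $q\equiv1\pmod3$.
   Context: In $\mathrm{PG}(3,q)$ with points $\mathbf P(x_0,x_1,x_2,x_3)$, the twisted cubic is $\mathcal C=\{\mathbf P(t^3,t^2,t,1):t\in\mathbb F_q\}\cup\{\mathbf P(1,0,0,0)\}$. Its osculating planes ($\Gamma$-planes) are $x_0-3tx_1+3t^2x_2-t^3x_3=0$ for $t\in\mathbb F_q$ and $x_3=0$. A $\mu_\Gamma$-point ($\mu\in\{1,3\}$) is a point off $\mathcal C$ lying in exactly $\mu$ distinct $\Gamma$-planes. *)

theory Defs
  imports Main
begin

type_synonym 'a vec4 = "'a \<times> 'a \<times> 'a \<times> 'a"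

definition scale4 :: "'a::field \<Rightarrow> 'a vec4 \<Rightarrow> 'a vec4" where
  "scale4 c v = (case v of (x0,x1,x2,x3) \<Rightarrow> (c*x0, c*x1, c*x2, c*x3))"

definition dot4 :: "'a::field vec4 \<Rightarrow> 'a vec4 \<Rightarrow> 'a" where
  "dot4 a v = (case a of (a0,a1,a2,a3) \<Rightarrow> case v of (x0,x1,x2,x3) \<Rightarrow>
      a0*x0 + a1*x1 + a2*x2 + a3*x3)"

definition pg_point :: "'a::field vec4 \<Rightarrow> 'a vec4 set" where
  "pg_point v = {w. \<exists>c. c \<noteq> 0 \<and> w = scale4 c v}"

definition PG3_points :: "'a::field vec4 set set" where
  "PG3_points = {pg_point v | v. v \<noteq> (0,0,0,0)}"

definition plane_of :: "'a::field vec4 \<Rightarrow> 'a vec4 set set" where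
  "plane_of a = {pg_point v | v. v \<noteq> (0,0,0,0) \<and> dot4 a v = 0}"

definition twisted_cubic :: "'a::field vec4 set set" where
  "twisted_cubic = {pg_point (t^3, t^2, t, 1) | t. True} \<union> {pg_point (1,0,0,0)}"

text \<open>Osculating planes: x0 - 3t x1 + 3t^2 x2 - t^3 x3 = 0 and x3 = 0.\<close>
definition Gamma_planes :: "'a::field vec4 set set set" where
  "Gamma_planes = {plane_of (1, -3*t, 3*t^2, -(t^3)) | t. True} \<union> {plane_of (0,0,0,1)}"

definition mu_Gamma_point :: "nat \<Rightarrow> 'a::field vec4 set \<Rightarrow> bool" where
  "mu_Gamma_point mu P \<longleftrightarrow> P \<in> PG3_points \<and> P \<notin> twisted_cubic \<and>
     card {\<pi> \<in> Gamma_planes. P \<in> \<pi>} = mu"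

end

theory Submission
  imports Defs "HOL-Number_Theory.Residues" "HOL-Computational_Algebra.Polynomial"
begin

(* The point P(1,0,1,0) lies on the plane x3 = 0, and on the osculating plane with parameter t
   iff 1 + 3t^2 = 0, i.e. iff (3t)^2 = -3. Osculating planes with distinct parameters are distinct,
   because the point of the cubic with parameter t lies on the osculating plane at s iff
   (t - s)^3 = 0. When 2 and 3 are invertible, s^2 = -3 iff w = (s - 1)/2 is a cube root of unity
   other than 1, and F_q contains such a w iff 3 divides q - 1. Hence P lies on three
   Gamma-planes when q = 1 (mod 3) and on one when q = 2 (mod 3). *)

lemma of_nat_prime_neq_0_if_not_dvd_card:
  assumes "prime p" and "\<not> p dvd card (UNIV :: 'a::ring_1 set)"
  shows "of_nat p \<noteq> (0 :: 'a)"
proof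
  assume "of_nat p = (0 :: 'a)"
  then have "CHAR('a) dvd p" by (simp add: of_nat_eq_0_iff_char_dvd)
  with assms(1) have "CHAR('a) = p"
    by (metis CHAR_not_1 One_nat_def prime_nat_iff)
  with CHAR_dvd_CARD[where 'a = 'a] assms(2) show False by simp
qed

lemma finite_field_power_card_minus_1:
  fixes x :: "'a::{finite,field}"
  assumes "x \<noteq> 0"
  shows "x ^ (card (UNIV :: 'a set) - 1) = 1"
proof -
  let ?U = "UNIV - {0 :: 'a}"
  have "(\<Prod>y\<in>?U. x * y) = (\<Prod>y\<in>?U. y)"
    by (rule prod.reindex_bij_witness[of _ "\<lambda>y. y / x" "\<lambda>y. x * y"]) (use assms in auto)
  moreover have "(\<Prod>y\<in>?U. x * y) = x ^ card ?U * (\<Prod>y\<in>?U. y)"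
    by (simp add: prod.distrib)
  moreover have "(\<Prod>y\<in>?U. y) \<noteq> 0" by simp
  ultimately show ?thesis by (simp add: card_Diff_singleton)
qed

lemma card_mod_3_if_cube_root_of_unity:
  fixes w :: "'a::{finite,field}"
  assumes "w \<noteq> 1" and "w ^ 3 = 1"
  shows "card (UNIV :: 'a set) mod 3 = 1"
proof -
  let ?q = "card (UNIV :: 'a set)"
  have "w \<noteq> 0" using assms(2) by auto
  then have "1 = w ^ (?q - 1)" by (rule finite_field_power_card_minus_1[symmetric])
  also have "\<dots> = (w ^ 3) ^ ((?q - 1) div 3) * w ^ ((?q - 1) mod 3)"
    by (simp flip: power_mult power_add)
  finally have wr: "w ^ ((?q - 1) mod 3) = 1" using assms(2) by simp
  have "(?q - 1) mod 3 = 0"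
  proof (rule ccontr)
    assume "(?q - 1) mod 3 \<noteq> 0"
    then consider "(?q - 1) mod 3 = 1" | "(?q - 1) mod 3 = 2" by linarith
    then show False
    proof cases
      case 1 then show False using wr assms(1) by simp
    next
      case 2
      then have "w ^ 3 = w * w ^ 2" and "w ^ 2 = 1"
        using wr by (simp_all add: power2_eq_square power3_eq_cube)
      then show False using assms by simp
    qed
  qed
  moreover have "?q \<ge> 1" by (simp add: Suc_leI finite_UNIV_card_ge_0)
  ultimately show ?thesis by presburger
qed

lemma cube_root_of_unity_if_card_mod_3:
  assumes "card (UNIV :: 'a::{finite,field} set) mod 3 = 1"
  shows "\<exists>w::'a. w \<noteq> 1 \<and> w ^ 3 = 1"
proof (rule ccontr)
  assume no_root: "\<not> ?thesis"
  let ?q = "card (UNIV :: 'a set)"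
  define m where "m = (?q - 1) div 3"
  have "card {0, 1 :: 'a} \<le> ?q" by (rule card_mono) simp_all
  then have "?q \<ge> 2" by simp
  then have qm: "?q - 1 = 3 * m" and "m \<ge> 1" using assms unfolding m_def by presburger+
  define p :: "'a poly" where "p = monom 1 m - 1"
  have "poly p 0 = -1" using \<open>m \<ge> 1\<close> by (simp add: p_def poly_monom)
  then have "p \<noteq> 0" by auto
  \<comment> \<open>Otherwise Fermat makes every nonzero element a root of \<open>X^m - 1\<close>: too many roots.\<close>
  have "x ^ m = 1" if "x \<noteq> 0" for x :: 'a
  proof -
    have "(x ^ m) ^ 3 = 1"
      using finite_field_power_card_minus_1[OF that] qm by (simp flip: power_mult add: mult.commute)
    then show ?thesis using no_root by blast
  qed
  then have "UNIV - {0} \<subseteq> {x. poly p x = 0}" by (auto simp: p_def poly_monom)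
  then have "card (UNIV - {0 :: 'a}) \<le> card {x. poly p x = 0}" by (intro card_mono) simp_all
  then have "?q - 1 \<le> card {x. poly p x = 0}" by (simp add: card_Diff_singleton)
  also have "\<dots> \<le> degree p" by (rule card_poly_roots_bound[OF \<open>p \<noteq> 0\<close>])
  also have "\<dots> \<le> m"
    unfolding p_def using degree_diff_le[of "monom 1 m" m "1 :: 'a poly"] by (simp add: degree_monom_eq)
  finally show False using qm \<open>m \<ge> 1\<close> by linarith
qed

lemma finite_field_nontrivial_cube_root_of_unity_iff:
  "(\<exists>w::'a::{finite,field}. w \<noteq> 1 \<and> w ^ 3 = 1) \<longleftrightarrow> card (UNIV :: 'a set) mod 3 = 1"
  using card_mod_3_if_cube_root_of_unity cube_root_of_unity_if_card_mod_3 by blast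

lemma card_square_roots:
  fixes a :: "'a::field"
  assumes "(2::'a) \<noteq> 0" and "a \<noteq> 0"
  shows "card {x. x ^ 2 = a} = (if \<exists>x. x ^ 2 = a then 2 else 0)"
proof (cases "\<exists>x. x ^ 2 = a")
  case True
  then obtain r where r: "r ^ 2 = a" by blast
  then have "{x. x ^ 2 = a} = {r, -r}" by (auto simp: power2_eq_iff)
  moreover have "r \<noteq> -r"
  proof
    assume "r = -r"
    then have "2 * r = 0" by (metis mult_2 right_minus)
    then show False using r assms by simp
  qed
  ultimately show ?thesis using True by simp
qed simp

lemma minus_three_square_iff_cube_root_of_unity:
  assumes "(2::'a::field) \<noteq> 0" and "(3::'a) \<noteq> 0"
  shows "(\<exists>s::'a. s ^ 2 = -3) \<longleftrightarrow> (\<exists>w::'a. w \<noteq> 1 \<and> w ^ 3 = 1)"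
proof -
  have square: "(2 * w + 1) ^ 2 + 3 = 4 * (w ^ 2 + w + 1)" for w :: 'a
    by (simp add: power2_eq_square algebra_simps)
  have cube: "w ^ 3 - 1 = (w - 1) * (w ^ 2 + w + 1)" for w :: 'a
    by (simp add: power2_eq_square power3_eq_cube algebra_simps)
  have "(4::'a) \<noteq> 0" using assms(1) by (metis mult_2_right mult_eq_0_iff numeral_Bit0)
  show ?thesis
  proof
    assume "\<exists>s::'a. s ^ 2 = -3"
    then obtain s :: 'a where s: "s ^ 2 = -3" by blast
    define w where "w = (s - 1) / 2"
    have "2 * w + 1 = s" using assms(1) by (simp add: w_def field_simps)
    then have "4 * (w ^ 2 + w + 1) = 0" using square[of w] s by simp
    then have "w ^ 2 + w + 1 = 0" using \<open>(4::'a) \<noteq> 0\<close> by (simp only: mult_eq_0_iff) simp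
    moreover have "w \<noteq> 1" using calculation assms(2) by auto
    ultimately show "\<exists>w::'a. w \<noteq> 1 \<and> w ^ 3 = 1" using cube[of w] by auto
  next
    assume "\<exists>w::'a. w \<noteq> 1 \<and> w ^ 3 = 1"
    then obtain w :: 'a where "w \<noteq> 1" "w ^ 3 = 1" by blast
    then have "w ^ 2 + w + 1 = 0" using cube[of w] by simp
    then have "(2 * w + 1) ^ 2 = -3" using square[of w] by (simp add: eq_neg_iff_add_eq_0)
    then show "\<exists>s::'a. s ^ 2 = -3" by blast
  qed
qed

lemma card_roots_1_plus_3_square:
  assumes "(2::'a::{finite,field}) \<noteq> 0" and "(3::'a) \<noteq> 0"
  shows "card {t::'a. 1 + 3 * t ^ 2 = 0} = (if card (UNIV :: 'a set) mod 3 = 1 then 2 else 0)"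
proof -
  have roots: "{t::'a. 1 + 3 * t ^ 2 = 0} = {t. t ^ 2 = -(1/3)}"
    using assms(2) by (auto simp: field_simps eq_neg_iff_add_eq_0)
  have "(\<exists>t::'a. t ^ 2 = -(1/3)) \<longleftrightarrow> (\<exists>s::'a. s ^ 2 = -3)"
  proof
    assume "\<exists>t::'a. t ^ 2 = -(1/3)"
    then obtain t :: 'a where "t ^ 2 = -(1/3)" by blast
    then have "(3 * t) ^ 2 = -3" using assms(2) by (simp add: power_mult_distrib)
    then show "\<exists>s::'a. s ^ 2 = -3" by blast
  next
    assume "\<exists>s::'a. s ^ 2 = -3"
    then obtain s :: 'a where "s ^ 2 = -3" by blast
    then have "(s / 3) ^ 2 = -(1/3)" using assms(2) by (simp add: power_divide power2_eq_square)
    then show "\<exists>t::'a. t ^ 2 = -(1/3)" by blast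
  qed
  also have "\<dots> \<longleftrightarrow> card (UNIV :: 'a set) mod 3 = 1"
    using minus_three_square_iff_cube_root_of_unity[OF assms]
    by (simp add: finite_field_nontrivial_cube_root_of_unity_iff)
  finally show ?thesis using card_square_roots[OF assms(1), of "-(1/3)"] assms(2) roots by simp
qed

lemma dot4_scale4: "dot4 a (scale4 c v) = c * dot4 a v"
  by (simp add: scale4_def dot4_def algebra_simps split: prod.split)

lemma pg_point_eq_imp_scale4:
  assumes "pg_point v = pg_point w"
  shows "\<exists>c. c \<noteq> 0 \<and> v = scale4 c w"
proof -
  have "v \<in> pg_point v"
    unfolding pg_point_def by (auto intro: exI[of _ 1] simp: scale4_def split: prod.split)
  then show ?thesis using assms unfolding pg_point_def by simp
qed

lemma pg_point_in_plane_of_iff: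
  assumes "v \<noteq> (0,0,0,0)"
  shows "pg_point v \<in> plane_of a \<longleftrightarrow> dot4 a v = 0"
proof
  assume "pg_point v \<in> plane_of a"
  then obtain w where "pg_point v = pg_point w" and "dot4 a w = 0" unfolding plane_of_def by blast
  then show "dot4 a v = 0" using pg_point_eq_imp_scale4 by (metis dot4_scale4 mult_zero_right)
qed (use assms in \<open>unfold plane_of_def, blast\<close>)

lemma pg_point_x3_0_in_twisted_cubic:
  assumes "pg_point (x0, x1, x2, 0) \<in> twisted_cubic"
  shows "x1 = 0 \<and> x2 = 0"
  using assms unfolding twisted_cubic_def by (auto dest!: pg_point_eq_imp_scale4 simp: scale4_def)

definition osculating_coeffs :: "'a::field \<Rightarrow> 'a vec4" where
  "osculating_coeffs t = (1, -3*t, 3*t^2, -(t^3))"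

lemma dot4_osculating_coeffs_cubic: "dot4 (osculating_coeffs s) (t^3, t^2, t, 1) = (t - s) ^ 3"
  by (simp add: osculating_coeffs_def dot4_def power2_eq_square power3_eq_cube algebra_simps)

lemma inj_osculating_plane: "inj (\<lambda>t. plane_of (osculating_coeffs t))"
proof (rule injI)
  fix s t :: 'a
  assume "plane_of (osculating_coeffs s) = plane_of (osculating_coeffs t)"
  moreover have "pg_point (t^3, t^2, t, 1) \<in> plane_of (osculating_coeffs t)"
    by (simp add: pg_point_in_plane_of_iff dot4_osculating_coeffs_cubic)
  ultimately have "pg_point (t^3, t^2, t, 1) \<in> plane_of (osculating_coeffs s)" by simp
  then show "s = t" by (simp add: pg_point_in_plane_of_iff dot4_osculating_coeffs_cubic)
qed

lemma plane_x3_neq_osculating_plane: "plane_of (0,0,0,1) \<noteq> plane_of (osculating_coeffs t)"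
proof -
  have "pg_point (1,0,0,0) \<in> plane_of (0,0,0,1)"
    and "pg_point (1,0,0,0) \<notin> plane_of (osculating_coeffs t)"
    by (simp_all add: pg_point_in_plane_of_iff dot4_def osculating_coeffs_def)
  then show ?thesis by metis
qed

lemma card_Gamma_planes_through:
  fixes v :: "'a::{finite,field} vec4"
  assumes "v \<noteq> (0,0,0,0)"
  shows "card {\<pi> \<in> Gamma_planes. pg_point v \<in> \<pi>} =
    card {t. dot4 (osculating_coeffs t) v = 0} + (if dot4 (0,0,0,1) v = 0 then 1 else 0)"
proof -
  let ?osc = "\<lambda>t. plane_of (osculating_coeffs t)"
  let ?T = "{t. dot4 (osculating_coeffs t) v = 0}"
  have planes: "{\<pi> \<in> Gamma_planes. pg_point v \<in> \<pi>} =
      ?osc ` ?T \<union> (if dot4 (0,0,0,1) v = 0 then {plane_of (0,0,0,1)} else {})"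
    using assms unfolding Gamma_planes_def osculating_coeffs_def[symmetric]
    by (auto simp: pg_point_in_plane_of_iff)
  have "card (?osc ` ?T) = card ?T"
    using inj_osculating_plane by (auto intro: card_image inj_on_subset)
  moreover have "plane_of (0,0,0,1) \<notin> ?osc ` ?T"
    using plane_x3_neq_osculating_plane by blast
  ultimately show ?thesis unfolding planes by (simp add: card_insert_if)
qed

theorem lemma5p1:
  fixes P :: "'a::{finite,field} vec4 set"
  assumes "odd (card (UNIV :: 'a set))" and "(card (UNIV :: 'a set)) mod 3 \<noteq> 0"
    and "P = pg_point (1,0,1,0)"
  shows "((card (UNIV :: 'a set)) mod 3 = 2 \<longrightarrow> mu_Gamma_point 1 P) \<and>
         ((card (UNIV :: 'a set)) mod 3 = 1 \<longrightarrow> mu_Gamma_point 3 P)"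
proof -
  have two: "(2::'a) \<noteq> 0"
    using of_nat_prime_neq_0_if_not_dvd_card[of 2] assms(1) by simp
  have three: "(3::'a) \<noteq> 0"
    using of_nat_prime_neq_0_if_not_dvd_card[of 3] assms(2) by (simp add: dvd_eq_mod_eq_0)
  have "P \<in> PG3_points"
    unfolding PG3_points_def assms(3) by (intro CollectI exI[of _ "(1,0,1,0)"]) simp
  moreover have "P \<notin> twisted_cubic"
    using pg_point_x3_0_in_twisted_cubic[of 1 0 1] assms(3) by auto
  moreover have "card {\<pi> \<in> Gamma_planes. P \<in> \<pi>} = card {t::'a. 1 + 3 * t ^ 2 = 0} + 1"
    using card_Gamma_planes_through[of "(1,0,1,0)"]
    by (simp add: assms(3) dot4_def osculating_coeffs_def)
  ultimately show ?thesis
    using card_roots_1_plus_3_square[OF two three] unfolding mu_Gamma_point_def by auto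
qed

end
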